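(* Let $G$ be a finite group and $X$ a finite $G$-poset. Then the orbit complex $\mathcal{K}(X)/G$ is equal to the simplicial complex $\mathcal{K}(X/G)$.
   Context: A finite $G$-poset is a finite poset with a (right) action of $G$ by order-preserving maps. $\mathcal{K}(Y)$ denotes the simplicial complex of non-empty chains of a poset $Y$. The orbit poset $X/G$ is the set of orbits $\overline{x}$ with $\overline{x}\le\overline{y}$ iff there exist $x_1\in\overline{x}$, $y_1\in\overline{y}$ with $x_1\le y_1$. For a $G$-complex $K$, the orbit complex $K/G$ has as vertices the orbits of vertices of $K$, and a set $\{\overline{v_0},\dots,\overline{v_n}\}$ of such orbits is a simplex iff there are representatives $w_i\in\overline{v_i}$ such that $\{w_0,\dots,w_n\}$ is a simplex of $K$. *)

theory Defs
  imports "HOL-Algebra.Group"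
begin

definition poset_on :: "'a set \<Rightarrow> ('a \<Rightarrow> 'a \<Rightarrow> bool) \<Rightarrow> bool" where
  "poset_on X leq \<longleftrightarrow>
     (\<forall>x\<in>X. leq x x) \<and>
     (\<forall>x\<in>X. \<forall>y\<in>X. leq x y \<and> leq y x \<longrightarrow> x = y) \<and>
     (\<forall>x\<in>X. \<forall>y\<in>X. \<forall>z\<in>X. leq x y \<and> leq y z \<longrightarrow> leq x z)"

definition right_action :: "('g, 'b) monoid_scheme \<Rightarrow> 'a set \<Rightarrow> ('a \<Rightarrow> 'g \<Rightarrow> 'a) \<Rightarrow> bool" where
  "right_action G X act \<longleftrightarrow>
     (\<forall>x\<in>X. \<forall>g\<in>carrier G. act x g \<in> X) \<and>
     (\<forall>x\<in>X. act x \<one>\<^bsub>G\<^esub> = x) \<and>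
     (\<forall>x\<in>X. \<forall>g\<in>carrier G. \<forall>h\<in>carrier G. act x (g \<otimes>\<^bsub>G\<^esub> h) = act (act x g) h)"

definition G_poset :: "('g, 'b) monoid_scheme \<Rightarrow> 'a set \<Rightarrow> ('a \<Rightarrow> 'a \<Rightarrow> bool) \<Rightarrow> ('a \<Rightarrow> 'g \<Rightarrow> 'a) \<Rightarrow> bool" where
  "G_poset G X leq act \<longleftrightarrow>
     group G \<and> poset_on X leq \<and> right_action G X act \<and>
     (\<forall>x\<in>X. \<forall>y\<in>X. \<forall>g\<in>carrier G. leq x y \<longrightarrow> leq (act x g) (act y g))"

text \<open>The simplicial complex K(Y) of non-empty chains of a poset (Y, leq),
  represented as its set of simplices.\<close>
definition chain_complex :: "'a set \<Rightarrow> ('a \<Rightarrow> 'a \<Rightarrow> bool) \<Rightarrow> 'a set set" where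
  "chain_complex Y leq = {\<sigma>. \<sigma> \<subseteq> Y \<and> \<sigma> \<noteq> {} \<and> (\<forall>x\<in>\<sigma>. \<forall>y\<in>\<sigma>. leq x y \<or> leq y x)}"

definition orbit_of :: "('g, 'b) monoid_scheme \<Rightarrow> ('a \<Rightarrow> 'g \<Rightarrow> 'a) \<Rightarrow> 'a \<Rightarrow> 'a set" where
  "orbit_of G act x = {act x g | g. g \<in> carrier G}"

definition orbit_le :: "('a \<Rightarrow> 'a \<Rightarrow> bool) \<Rightarrow> 'a set \<Rightarrow> 'a set \<Rightarrow> bool" where
  "orbit_le leq V1 V2 \<longleftrightarrow> (\<exists>x1\<in>V1. \<exists>y1\<in>V2. leq x1 y1)"

definition orbit_complex :: "('g, 'b) monoid_scheme \<Rightarrow> ('a \<Rightarrow> 'g \<Rightarrow> 'a) \<Rightarrow> 'a set set \<Rightarrow> 'a set set set" where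
  "orbit_complex G act K =
     {S. (\<forall>V\<in>S. V \<in> orbit_of G act ` (\<Union>K)) \<and>
         (\<exists>w. (\<forall>V\<in>S. w V \<in> V) \<and> w ` S \<in> K)}"

end

theory Submission
  imports Defs
begin

text \<open>
  Comparable representatives have comparable orbits, which gives one inclusion.
  Conversely, the order on orbits lifts along the action: if the orbit of x lies below
  an orbit V, witnessed by u \<le> v, and x = u g, then x \<le> v g \<in> V.  Hence the order on
  orbits is transitive, and a finite chain of orbits is lifted to a chain of X by removing
  its greatest orbit M, lifting the rest, and choosing the representative of M above the
  top of the lifted chain.
\<close>

context
  fixes G :: "('g, 'b) monoid_scheme" and X :: "'a set"
    and leq :: "'a \<Rightarrow> 'a \<Rightarrow> bool" and act :: "'a \<Rightarrow> 'g \<Rightarrow> 'a"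
  assumes G_poset: "G_poset G X leq act"
begin

lemma group: "group G"
  using G_poset unfolding G_poset_def by simp

lemma act_closed: "x \<in> X \<Longrightarrow> g \<in> carrier G \<Longrightarrow> act x g \<in> X"
  using G_poset unfolding G_poset_def right_action_def by blast

lemma act_one: "x \<in> X \<Longrightarrow> act x \<one>\<^bsub>G\<^esub> = x"
  using G_poset unfolding G_poset_def right_action_def by blast

lemma act_mult:
  "x \<in> X \<Longrightarrow> g \<in> carrier G \<Longrightarrow> h \<in> carrier G \<Longrightarrow> act x (g \<otimes>\<^bsub>G\<^esub> h) = act (act x g) h"
  using G_poset unfolding G_poset_def right_action_def by blast

lemma act_mono: "x \<in> X \<Longrightarrow> y \<in> X \<Longrightarrow> g \<in> carrier G \<Longrightarrow> leq x y \<Longrightarrow> leq (act x g) (act y g)"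
  using G_poset unfolding G_poset_def by blast

lemma leq_refl: "x \<in> X \<Longrightarrow> leq x x"
  using G_poset unfolding G_poset_def poset_on_def by blast

lemma leq_trans: "x \<in> X \<Longrightarrow> y \<in> X \<Longrightarrow> z \<in> X \<Longrightarrow> leq x y \<Longrightarrow> leq y z \<Longrightarrow> leq x z"
  using G_poset unfolding G_poset_def poset_on_def by blast

lemma orbit_of_subset: "x \<in> X \<Longrightarrow> orbit_of G act x \<subseteq> X"
  unfolding orbit_of_def using act_closed by blast

lemma orbit_of_self:
  assumes "x \<in> X"
  shows "x \<in> orbit_of G act x"
proof -
  have "\<one>\<^bsub>G\<^esub> \<in> carrier G"
    by (simp add: group.is_monoid[OF group] monoid.one_closed)
  then show ?thesis
    unfolding orbit_of_def using act_one[OF assms] by force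
qed

lemma orbit_of_act_closed:
  assumes "x \<in> X" "a \<in> orbit_of G act x" "g \<in> carrier G"
  shows "act a g \<in> orbit_of G act x"
proof -
  obtain h where "h \<in> carrier G" "a = act x h"
    using assms(2) unfolding orbit_of_def by blast
  moreover have "h \<otimes>\<^bsub>G\<^esub> g \<in> carrier G"
    using \<open>h \<in> carrier G\<close> assms(3) by (simp add: group.is_monoid[OF group] monoid.m_closed)
  ultimately have "act a g = act x (h \<otimes>\<^bsub>G\<^esub> g)" "h \<otimes>\<^bsub>G\<^esub> g \<in> carrier G"
    using act_mult assms(1,3) by simp_all
  then show ?thesis
    unfolding orbit_of_def by blast
qed

lemma orbit_of_transitive:
  assumes "x \<in> X" "a \<in> orbit_of G act x" "b \<in> orbit_of G act x"
  shows "\<exists>g\<in>carrier G. b = act a g"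
proof -
  interpret group G by (rule group)
  obtain h where h: "h \<in> carrier G" "a = act x h"
    using assms(2) unfolding orbit_of_def by blast
  obtain k where k: "k \<in> carrier G" "b = act x k"
    using assms(3) unfolding orbit_of_def by blast
  define g where "g = inv\<^bsub>G\<^esub> h \<otimes>\<^bsub>G\<^esub> k"
  have g: "g \<in> carrier G"
    unfolding g_def using h(1) k(1) by simp
  have "h \<otimes>\<^bsub>G\<^esub> g = k"
    unfolding g_def using h(1) k(1) by (simp add: m_assoc[symmetric])
  then have "act a g = b"
    using act_mult[OF assms(1) h(1) g] h(2) k(2) by argo
  then show ?thesis
    using g by blast
qed

lemma orbit_of_eq:
  assumes "x \<in> X" "a \<in> orbit_of G act x"
  shows "orbit_of G act a = orbit_of G act x"
proof (intro subset_antisym subsetI)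
  fix y assume "y \<in> orbit_of G act a"
  then obtain g where "g \<in> carrier G" "y = act a g"
    unfolding orbit_of_def by blast
  then show "y \<in> orbit_of G act x"
    using orbit_of_act_closed[OF assms] by simp
next
  fix y assume "y \<in> orbit_of G act x"
  then obtain g where "g \<in> carrier G" "y = act a g"
    using orbit_of_transitive[OF assms] by blast
  then show "y \<in> orbit_of G act a"
    unfolding orbit_of_def by blast
qed

lemma orbit_le_lift:
  assumes "x \<in> X" "V \<in> orbit_of G act ` X" "orbit_le leq (orbit_of G act x) V"
  shows "\<exists>y\<in>V. leq x y"
proof -
  obtain z where z: "z \<in> X" "V = orbit_of G act z"
    using assms(2) by blast
  obtain u v where uv: "u \<in> orbit_of G act x" "v \<in> V" "leq u v"
    using assms(3) unfolding orbit_le_def by blast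
  obtain g where g: "g \<in> carrier G" "x = act u g"
    using orbit_of_transitive[OF assms(1) uv(1) orbit_of_self[OF assms(1)]] by blast
  have "u \<in> X" "v \<in> X"
    using uv(1,2) z orbit_of_subset assms(1) by blast+
  then have "leq x (act v g)"
    using act_mono g uv(3) by simp
  moreover have "act v g \<in> V"
    using orbit_of_act_closed[OF z(1)] uv(2) g(1) z(2) by simp
  ultimately show ?thesis
    by blast
qed

lemma transp_on_orbit_le: "transp_on (orbit_of G act ` X) (orbit_le leq)"
proof (rule transp_onI)
  fix U V W
  assume UVW: "U \<in> orbit_of G act ` X" "V \<in> orbit_of G act ` X" "W \<in> orbit_of G act ` X"
    and UV: "orbit_le leq U V" and VW: "orbit_le leq V W"
  obtain x where x: "x \<in> X" "U = orbit_of G act x"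
    using UVW(1) by blast
  obtain y where y: "y \<in> V" "leq x y"
    using orbit_le_lift[OF x(1) UVW(2)] UV x(2) by blast
  have "y \<in> X" "orbit_of G act y = V"
    using UVW(2) y(1) orbit_of_subset orbit_of_eq by blast+
  then obtain z where z: "z \<in> W" "leq y z"
    using orbit_le_lift[OF _ UVW(3)] VW by blast
  have "z \<in> X"
    using UVW(3) z(1) orbit_of_subset by blast
  then have "leq x z"
    using leq_trans x(1) \<open>y \<in> X\<close> y(2) z(2) by blast
  then show "orbit_le leq U W"
    unfolding orbit_le_def using orbit_of_self x z(1) by blast
qed

lemma Union_chain_complex: "\<Union>(chain_complex X leq) = X"
proof (intro subset_antisym subsetI)
  fix x assume "x \<in> X"
  then have "{x} \<in> chain_complex X leq"
    unfolding chain_complex_def using leq_refl by simp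
  then show "x \<in> \<Union>(chain_complex X leq)"
    by blast
qed (auto simp: chain_complex_def)

lemma chain_upper_bound_in_orbit:
  assumes "finite C" "C \<subseteq> X" and chain: "\<forall>c\<in>C. \<forall>d\<in>C. leq c d \<or> leq d c"
    and V: "V \<in> orbit_of G act ` X" and below: "\<forall>c\<in>C. orbit_le leq (orbit_of G act c) V"
  shows "\<exists>y\<in>V. \<forall>c\<in>C. leq c y"
proof (cases "C = {}")
  case True
  then show ?thesis
    using V orbit_of_self by blast
next
  case False
  have "transp_on C leq"
    using assms(2) leq_trans unfolding transp_on_def by blast
  moreover have "totalp_on C leq"
    using chain unfolding totalp_on_def by blast
  ultimately obtain t where t: "t \<in> C" "\<forall>c\<in>C. c \<noteq> t \<longrightarrow> leq c t"
    using Finite_Set.bex_greatest_element[OF assms(1) False] by blast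
  then obtain y where y: "y \<in> V" "leq t y"
    using orbit_le_lift[OF _ V] below assms(2) by blast
  have "y \<in> X"
    using V y(1) orbit_of_subset by blast
  then have "leq c y" if "c \<in> C" for c
    using that t y(2) assms(2) leq_trans by (cases "c = t") blast+
  then show ?thesis
    using y(1) by blast
qed

lemma chain_lift:
  assumes "finite S" and orbits: "S \<subseteq> orbit_of G act ` X"
    and chain: "\<forall>U\<in>S. \<forall>V\<in>S. orbit_le leq U V \<or> orbit_le leq V U"
  shows "\<exists>w. (\<forall>V\<in>S. w V \<in> V) \<and> (\<forall>U\<in>S. \<forall>V\<in>S. leq (w U) (w V) \<or> leq (w V) (w U))"
  using assms(1)
proof (induction S rule: finite_remove_induct)
  case empty
  then show ?case by simp
next
  case (remove A)
  have "transp_on A (orbit_le leq)"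
    using transp_on_subset[OF transp_on_orbit_le] orbits remove.hyps(3) by blast
  moreover have "totalp_on A (orbit_le leq)"
    using chain remove.hyps(3) unfolding totalp_on_def by blast
  ultimately obtain M where M: "M \<in> A" "\<forall>U\<in>A. U \<noteq> M \<longrightarrow> orbit_le leq U M"
    using Finite_Set.bex_greatest_element[OF remove.hyps(1,2)] by blast
  obtain w where w: "\<forall>V\<in>A - {M}. w V \<in> V"
    and w_chain: "\<forall>U\<in>A - {M}. \<forall>V\<in>A - {M}. leq (w U) (w V) \<or> leq (w V) (w U)"
    using remove.IH[OF M(1)] by blast
  have A_orbits: "A \<subseteq> orbit_of G act ` X"
    using orbits remove.hyps(3) by blast
  have w_orbit: "w U \<in> X \<and> orbit_of G act (w U) = U" if U: "U \<in> A - {M}" for U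
  proof -
    obtain x where "x \<in> X" "U = orbit_of G act x"
      using U A_orbits by blast
    moreover have "w U \<in> U"
      using w U by blast
    ultimately show ?thesis
      using orbit_of_subset orbit_of_eq by blast
  qed
  then have w_X: "w ` (A - {M}) \<subseteq> X"
    by (simp add: image_subset_iff)
  have "\<forall>c\<in>w ` (A - {M}). orbit_le leq (orbit_of G act c) M"
    using w_orbit M(2) by auto
  moreover have "finite (w ` (A - {M}))"
    using remove.hyps(1) by simp
  ultimately obtain y where y: "y \<in> M" "\<forall>c\<in>w ` (A - {M}). leq c y"
    using chain_upper_bound_in_orbit[OF _ w_X _ subsetD[OF A_orbits M(1)]] w_chain by blast
  have "y \<in> X"
    using y(1) M(1) A_orbits orbit_of_subset by blast
  define w' where "w' = w(M := y)"
  have "\<forall>V\<in>A. w' V \<in> V"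
    unfolding w'_def using w y(1) by simp
  moreover have "leq (w' U) (w' V) \<or> leq (w' V) (w' U)" if "U \<in> A" "V \<in> A" for U V
    unfolding w'_def using that w_chain y(2) leq_refl[OF \<open>y \<in> X\<close>]
    by (cases "U = M"; cases "V = M") simp_all
  ultimately show ?case
    by blast
qed

lemma orbit_complex_subset_chain_complex:
  "orbit_complex G act (chain_complex X leq) \<subseteq> chain_complex (orbit_of G act ` X) (orbit_le leq)"
proof
  fix S assume "S \<in> orbit_complex G act (chain_complex X leq)"
  then obtain w where S: "S \<subseteq> orbit_of G act ` X" and w: "\<forall>V\<in>S. w V \<in> V"
    and w_chain: "w ` S \<in> chain_complex X leq"
    unfolding orbit_complex_def Union_chain_complex by auto
  have "orbit_le leq U V \<or> orbit_le leq V U" if "U \<in> S" "V \<in> S" for U V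
  proof -
    have "leq (w U) (w V) \<or> leq (w V) (w U)"
      using w_chain that unfolding chain_complex_def by simp
    then show ?thesis
      unfolding orbit_le_def using w that by blast
  qed
  moreover have "S \<noteq> {}"
    using w_chain unfolding chain_complex_def by auto
  ultimately show "S \<in> chain_complex (orbit_of G act ` X) (orbit_le leq)"
    unfolding chain_complex_def using S by blast
qed

lemma chain_complex_subset_orbit_complex:
  assumes "finite X"
  shows "chain_complex (orbit_of G act ` X) (orbit_le leq) \<subseteq> orbit_complex G act (chain_complex X leq)"
proof
  fix S assume "S \<in> chain_complex (orbit_of G act ` X) (orbit_le leq)"
  then have S: "S \<subseteq> orbit_of G act ` X" "S \<noteq> {}"
    and S_chain: "\<forall>U\<in>S. \<forall>V\<in>S. orbit_le leq U V \<or> orbit_le leq V U"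
    unfolding chain_complex_def by auto
  have "finite S"
    using finite_subset[OF S(1)] assms by simp
  then obtain w where w: "\<forall>V\<in>S. w V \<in> V"
    and w_chain: "\<forall>U\<in>S. \<forall>V\<in>S. leq (w U) (w V) \<or> leq (w V) (w U)"
    using chain_lift[OF \<open>finite S\<close> S(1) S_chain] by blast
  have "w ` S \<subseteq> X"
    using w S(1) orbit_of_subset by fast
  then have "w ` S \<in> chain_complex X leq"
    unfolding chain_complex_def using S(2) w_chain by simp
  then show "S \<in> orbit_complex G act (chain_complex X leq)"
    unfolding orbit_complex_def Union_chain_complex using S(1) w by blast
qed

end

theorem proposition2p7:
  fixes G :: "('g, 'b) monoid_scheme" and X :: "'a set"
    and leq :: "'a \<Rightarrow> 'a \<Rightarrow> bool" and act :: "'a \<Rightarrow> 'g \<Rightarrow> 'a"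
  assumes "finite (carrier G)" and "finite X" and "G_poset G X leq act"
  shows "orbit_complex G act (chain_complex X leq)
           = chain_complex (orbit_of G act ` X) (orbit_le leq)"
  using orbit_complex_subset_chain_complex[OF assms(3)]
    chain_complex_subset_orbit_complex[OF assms(3,2)]
  by (rule subset_antisym)

end
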